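(* Consider the Markov process described in the context with $K=1$, satisfying Assumption (A) and the ergodicity condition (E). Then for every $x\in\{-1,1\}^c$ the equation $(\mathrm E_x)$ has exactly one root $\beta_0\in(0,1)$; in total this gives $2^c$ roots (one for each $x$).
   Context: Fix integers $c\ge 1$ and $K\ge1$ (in the claim $K=1$). Consider an irreducible continuous-time Markov process on $V\cup W$, where $V$ is finite and $W=\{\mathbf n=(n_0,\dots,n_c): n_0\in\{0,1,\dots\},\ n_i\in\{0,1\}\}$. For each $i\in\{1,\dots,c\}$ and integer $k\le K$ there are nonnegative rates $a_{k,i},b_{k,i},c_{k,i},d_{k,i}$. From $\mathbf n\in W$, for each $i$ and $k\in\{-n_0,\dots,K\}$, the process jumps (changing only coordinates $0$ and $i$) from $(n_0,n_i)=(n_0,0)$ to $(n_0+k,1)$ at rate $a_{k,i}$ and to $(n_0+k,0)$ at rate $b_{k,i}$, and from $(n_0,1)$ to $(n_0+k,1)$ at rate $c_{k,i}$ and to $(n_0+k,0)$ at rate $d_{k,i}$; from $\mathbf n$ it jumps into $V$ with total rate $\sum_i\sum_{k\le -n_0-1}((1-n_i)(a_{k,i}+b_{k,i})+n_i(c_{k,i}+d_{k,i}))$; no other transitions leave $W$, and from $V$ no transitions go to states with $n_0\ge K$. Let $A_i(z)=\sum_{k=-\infty}^K a_{k,i}z^{K-k}$ and similarly $B_i,C_i,D_i$ with $b,c,d$. Assumption (A): for each $i$: (i) $A_i(1),B_i(1),C_i(1),D_i(1)<\infty$; (ii) $A_i(1),D_i(1)>0$; (iii) $A_i'(1),B_i'(1),C_i'(1),D_i'(1)<\infty$;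 (iv) $a_{K,i}=0$ or $d_{K,i}=0$; (v) $b_{K,i}=c_{K,i}\ne0$. Ergodicity condition (E): $0<\sum_{i=1}^c\frac{1}{A_i(1)+D_i(1)}\bigl(D_i(1)(A_i'(1)-KA_i(1)+B_i'(1)-KB_i(1))+A_i(1)(C_i'(1)-KC_i(1)+D_i'(1)-KD_i(1))\bigr)$. Let $F_i(z)=z^K(A_i(1)+B_i(1)-C_i(1)-D_i(1))-B_i(z)+C_i(z)$. For real $\beta_0\in[0,1]$ let $R_i(\beta_0)=\sqrt{F_i(\beta_0)^2+4A_i(\beta_0)D_i(\beta_0)}$ (nonnegative square root). For $x\in\{-1,1\}^c$, equation $(\mathrm E_x)$ in the unknown $\beta_0$ is \[0=\sum_{i=1}^c\Bigl(x_iR_i(\beta_0)+B_i(\beta_0)+C_i(\beta_0)-\beta_0^K\bigl(A_i(1)+B_i(1)+C_i(1)+D_i(1)\bigr)\Bigr).\] *)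

theory Defs
  imports "HOL-Analysis.Analysis"
begin

text \<open>Rates are given as functions \<open>r :: nat \<Rightarrow> int \<Rightarrow> real\<close>, \<open>r i k\<close> being the
  rate with index \<open>i\<close> and jump \<open>k \<le> K\<close>. With \<open>K = 1\<close> the generating function is
  \<open>\<Sum>_{k\<le>1} r i k z^(1-k) = \<Sum>_m r i (1-m) z^m\<close>.\<close>

definition gf1 :: "(nat \<Rightarrow> int \<Rightarrow> real) \<Rightarrow> nat \<Rightarrow> real \<Rightarrow> real" where
  "gf1 r i z = (\<Sum>m. r i (1 - int m) * z ^ m)"

definition gf1_deriv_at1 :: "(nat \<Rightarrow> int \<Rightarrow> real) \<Rightarrow> nat \<Rightarrow> real" where
  "gf1_deriv_at1 r i = (\<Sum>m. real m * r i (1 - int m))"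

definition assumption_A :: "nat \<Rightarrow> (nat \<Rightarrow> int \<Rightarrow> real) \<Rightarrow> (nat \<Rightarrow> int \<Rightarrow> real)
    \<Rightarrow> (nat \<Rightarrow> int \<Rightarrow> real) \<Rightarrow> (nat \<Rightarrow> int \<Rightarrow> real) \<Rightarrow> bool" where
  "assumption_A c a b cc d \<longleftrightarrow>
     (\<forall>i\<in>{1..c}.
        (\<forall>r\<in>{a, b, cc, d}. \<forall>k\<le>1. 0 \<le> r i k) \<and>
        (\<forall>r\<in>{a, b, cc, d}. summable (\<lambda>m. r i (1 - int m))) \<and>
        gf1 a i 1 > 0 \<and> gf1 d i 1 > 0 \<and>
        (\<forall>r\<in>{a, b, cc, d}. summable (\<lambda>m. real m * r i (1 - int m))) \<and>
        (a i 1 = 0 \<or> d i 1 = 0) \<and>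
        b i 1 = cc i 1 \<and> b i 1 \<noteq> 0)"

definition ergodicity_E :: "nat \<Rightarrow> (nat \<Rightarrow> int \<Rightarrow> real) \<Rightarrow> (nat \<Rightarrow> int \<Rightarrow> real)
    \<Rightarrow> (nat \<Rightarrow> int \<Rightarrow> real) \<Rightarrow> (nat \<Rightarrow> int \<Rightarrow> real) \<Rightarrow> bool" where
  "ergodicity_E c a b cc d \<longleftrightarrow>
     0 < (\<Sum>i=1..c. 1 / (gf1 a i 1 + gf1 d i 1) *
        (gf1 d i 1 * (gf1_deriv_at1 a i - gf1 a i 1 + gf1_deriv_at1 b i - gf1 b i 1)
         + gf1 a i 1 * (gf1_deriv_at1 cc i - gf1 cc i 1 + gf1_deriv_at1 d i - gf1 d i 1)))"

definition F1 :: "(nat \<Rightarrow> int \<Rightarrow> real) \<Rightarrow> (nat \<Rightarrow> int \<Rightarrow> real)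
    \<Rightarrow> (nat \<Rightarrow> int \<Rightarrow> real) \<Rightarrow> (nat \<Rightarrow> int \<Rightarrow> real) \<Rightarrow> nat \<Rightarrow> real \<Rightarrow> real" where
  "F1 a b cc d i z = z * (gf1 a i 1 + gf1 b i 1 - gf1 cc i 1 - gf1 d i 1) - gf1 b i z + gf1 cc i z"

definition R1 :: "(nat \<Rightarrow> int \<Rightarrow> real) \<Rightarrow> (nat \<Rightarrow> int \<Rightarrow> real)
    \<Rightarrow> (nat \<Rightarrow> int \<Rightarrow> real) \<Rightarrow> (nat \<Rightarrow> int \<Rightarrow> real) \<Rightarrow> nat \<Rightarrow> real \<Rightarrow> real" where
  "R1 a b cc d i z = sqrt ((F1 a b cc d i z)\<^sup>2 + 4 * gf1 a i z * gf1 d i z)"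

definition eq_Ex :: "nat \<Rightarrow> (nat \<Rightarrow> int \<Rightarrow> real) \<Rightarrow> (nat \<Rightarrow> int \<Rightarrow> real)
    \<Rightarrow> (nat \<Rightarrow> int \<Rightarrow> real) \<Rightarrow> (nat \<Rightarrow> int \<Rightarrow> real) \<Rightarrow> (nat \<Rightarrow> real) \<Rightarrow> real \<Rightarrow> bool" where
  "eq_Ex c a b cc d x \<beta> \<longleftrightarrow>
     0 = (\<Sum>i=1..c. x i * R1 a b cc d i \<beta> + gf1 b i \<beta> + gf1 cc i \<beta>
            - \<beta> * (gf1 a i 1 + gf1 b i 1 + gf1 cc i 1 + gf1 d i 1))"

end

theory Submission
  imports Defs
begin

text \<open>Write the \<open>i\<close>-th summand of \<open>(E\<^sub>x)\<close> as \<open>P\<^sub>i(z) + Q\<^sub>i(z) + x\<^sub>i R\<^sub>i(z)\<close> with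
  \<open>P\<^sub>i = B\<^sub>i(z) - z (A\<^sub>i(1) + B\<^sub>i(1))\<close>, \<open>Q\<^sub>i = C\<^sub>i(z) - z (C\<^sub>i(1) + D\<^sub>i(1))\<close> and
  \<open>R\<^sub>i = sqrt ((Q\<^sub>i - P\<^sub>i)\<^sup>2 + 4 A\<^sub>i D\<^sub>i)\<close>. Divided by \<open>sqrt z * (1 - z)\<close>, every summand is
  strictly decreasing on \<open>(0, 1)\<close>, so the equation has at most one root there.

  For \<open>x\<^sub>i = -1\<close> the scaled summand is twice the smaller eigenvalue of a symmetric
  \<open>2 \<times> 2\<close> matrix whose diagonal decreases and whose off-diagonal entry increases.
  For \<open>x\<^sub>i = 1\<close>, \<open>\<Lambda> = (P\<^sub>i + Q\<^sub>i + R\<^sub>i) / sqrt z\<close> is twice the larger eigenvalue of a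
  symmetric matrix, and \<open>\<Lambda>(1) = 0\<close>; it suffices that \<open>\<Lambda>\<close> lies strictly below its chords
  to \<open>z = 1\<close>. As a maximum of Rayleigh quotients, \<open>\<Lambda>\<close> is bounded below by the quotient of
  the maximising vector at the point of interest, and (after Cauchy--Schwarz for the
  off-diagonal power series) that quotient is a nonnegative combination of the functions
  \<open>sqrt z ^ k\<close> with \<open>k \<noteq> 1\<close> and \<open>- sqrt z\<close>, each lying below such chords; the term
  \<open>1 / sqrt z\<close>, with weight \<open>b\<^sub>1\<^sub>,\<^sub>i > 0\<close>, lies strictly below.

  For existence, at \<open>z = 0\<close> the sum is twice the sum of the positive rates \<open>b\<^sub>1\<^sub>,\<^sub>i\<close>. At
  \<open>z = 1\<close> it is negative unless all \<open>x\<^sub>i = 1\<close>; in that case it vanishes at \<open>1\<close> and its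
  difference quotient there is twice the right-hand side of (E), so it is negative just left
  of \<open>1\<close>. The intermediate value theorem gives the root.\<close>

section \<open>Power series with nonnegative coefficients on the unit interval\<close>

definition pser :: "(nat \<Rightarrow> real) \<Rightarrow> real \<Rightarrow> real" where
  "pser f x = (\<Sum>m. f m * x ^ m)"

lemma summable_pser:
  fixes f :: "nat \<Rightarrow> real"
  assumes "\<And>m. 0 \<le> f m" "summable f" "0 \<le> x" "x \<le> 1"
  shows "summable (\<lambda>m. f m * x ^ m)"
proof (rule summable_comparison_test'[OF assms(2)])
  fix m :: nat
  have "x ^ m \<le> 1" using assms by (simp add: power_le_one)
  then show "norm (f m * x ^ m) \<le> f m"
    using assms by (simp add: abs_mult mult_left_le)
qed

lemma pser_sums:
  assumes "\<And>m. 0 \<le> f m" "summable f" "0 \<le> x" "x \<le> 1"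
  shows "(\<lambda>m. f m * x ^ m) sums pser f x"
  unfolding pser_def using summable_pser[OF assms] by (rule summable_sums)

lemma pser_nonneg:
  assumes "\<And>m. 0 \<le> f m" "summable f" "0 \<le> x" "x \<le> 1"
  shows "0 \<le> pser f x"
  unfolding pser_def using assms by (intro suminf_nonneg summable_pser) auto

lemma pser_mono:
  assumes "\<And>m. 0 \<le> f m" "summable f" "0 \<le> x" "x \<le> y" "y \<le> 1"
  shows "pser f x \<le> pser f y"
  unfolding pser_def
proof (rule suminf_le)
  show "summable (\<lambda>m. f m * x ^ m)" "summable (\<lambda>m. f m * y ^ m)"
    using assms by (auto intro!: summable_pser)
  show "f m * x ^ m \<le> f m * y ^ m" for m
    using assms by (intro mult_left_mono power_mono) auto
qed

lemma pser_term_le: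
  assumes "\<And>m. 0 \<le> f m" "summable f" "0 \<le> x" "x \<le> 1"
  shows "f n * x ^ n \<le> pser f x"
  using sum_le_suminf[OF summable_pser[OF assms], of "{n}"] assms unfolding pser_def by auto

lemma pser_0 [simp]: "pser f 0 = f 0"
  unfolding pser_def using powser_zero[of f] by simp

lemma continuous_on_pser:
  assumes "\<And>m. 0 \<le> f m" "summable f"
  shows "continuous_on {0..1} (pser f)"
proof -
  have "uniform_limit {0..1} (\<lambda>n x. \<Sum>i<n. f i * x ^ i) (pser f) sequentially"
    unfolding pser_def
  proof (rule Weierstrass_m_test[OF _ assms(2)])
    fix n :: nat and x :: real assume "x \<in> {0..1}"
    then have "x ^ n \<le> 1" "0 \<le> x ^ n" by (auto simp: power_le_one)
    then show "norm (f n * x ^ n) \<le> f n"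
      using assms by (simp add: abs_mult mult_left_le)
  qed
  then show ?thesis
    by (rule uniform_limit_theorem[rotated]) (auto intro!: always_eventually continuous_intros)
qed

lemma pser_shift:
  assumes "\<And>m. 0 \<le> f m" "summable f" "f 0 = 0" "0 \<le> x" "x \<le> 1"
  shows "pser f x = x * pser (\<lambda>n. f (Suc n)) x"
  using powser_split_head(1)[OF summable_pser[OF assms(1,2,4,5)]] assms(3)
  unfolding pser_def by simp

lemma pser_sqrt_mult_le_mean:
  assumes nn: "\<And>m. 0 \<le> f m" and s: "summable f"
    and x: "0 \<le> x" "x \<le> 1" and y: "0 \<le> y" "y \<le> 1" and r: "0 < r"
  shows "pser f (sqrt x * sqrt y) \<le> (r * pser f x + pser f y / r) / 2"
proof (rule sums_le[OF _ pser_sums[OF nn s]])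
  show "(\<lambda>m. (r * (f m * x ^ m) + f m * y ^ m / r) / 2) sums ((r * pser f x + pser f y / r) / 2)"
    by (intro sums_divide sums_add sums_mult pser_sums nn s x y)
  fix m
  have "(sqrt x * sqrt y) ^ m = sqrt (r * x ^ m * (y ^ m / r))"
    using r by (simp add: power_mult_distrib real_sqrt_power real_sqrt_mult)
  also have "2 * \<dots> \<le> r * x ^ m + y ^ m / r"
    using r x y arith_geo_mean_sqrt[of "r * x ^ m" "y ^ m / r"] by simp
  finally have "2 * (sqrt x * sqrt y) ^ m \<le> r * x ^ m + y ^ m / r" by simp
  from mult_left_mono[OF this nn[of m]]
  show "f m * (sqrt x * sqrt y) ^ m \<le> (r * (f m * x ^ m) + f m * y ^ m / r) / 2"
    by (simp add: algebra_simps)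
qed (use x y in \<open>auto simp: mult_le_one\<close>)

lemma pser_sqrt_mult_le:
  assumes nn: "\<And>m. 0 \<le> f m" and s: "summable f"
    and x: "0 \<le> x" "x \<le> 1" and y: "0 \<le> y" "y \<le> 1"
  shows "pser f (sqrt x * sqrt y) \<le> sqrt (pser f x * pser f y)"
proof -
  note amgm = pser_sqrt_mult_le_mean[OF nn s x y]
  have px: "0 \<le> pser f x" and py: "0 \<le> pser f y"
    using pser_nonneg[OF nn s] x y by auto
  show ?thesis
  proof (cases "pser f x = 0 \<or> pser f y = 0")
    case True
    \<comment> \<open>let \<open>r\<close> tend to \<open>\<infinity>\<close> or to \<open>0\<close> in the mean bound\<close>
    have "pser f (sqrt x * sqrt y) \<le> e" if e: "0 < e" for e
    proof -
      define r where "r = (if pser f x = 0 then pser f y / e + 1 else e / (pser f x + 1))"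
      have "r > 0" using px py e by (auto simp: r_def add_nonneg_pos)
      have "(r * pser f x + pser f y / r) / 2 \<le> e"
      proof (cases "pser f x = 0")
        case True
        then show ?thesis using py e by (simp add: r_def field_simps)
      next
        case False
        then have "pser f y = 0" using \<open>pser f x = 0 \<or> pser f y = 0\<close> by simp
        then show ?thesis using False px e by (simp add: r_def field_simps)
      qed
      with amgm[OF \<open>r > 0\<close>] show ?thesis by linarith
    qed
    then have "pser f (sqrt x * sqrt y) \<le> 0"
      using field_le_epsilon[of _ 0] by (metis add_0)
    then show ?thesis using True by auto
  next
    case False
    then have pos: "pser f x > 0" "pser f y > 0" using px py by auto
    have "pser f (sqrt x * sqrt y) \<le> (sqrt (pser f y / pser f x) * pser f x
        + pser f y / sqrt (pser f y / pser f x)) / 2"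
      using pos by (intro amgm) simp
    also have "\<dots> = sqrt (pser f x * pser f y)"
      using pos by (simp add: real_sqrt_divide real_sqrt_mult field_simps)
    finally show ?thesis .
  qed
qed

lemma pser_mult_divide:
  fixes f :: "nat \<Rightarrow> real"
  assumes "\<And>m. 0 \<le> f m" "summable f" "0 \<le> u" "u \<le> 1" "0 \<le> t" "t \<le> 1"
  shows "pser f (u * t) / N = pser (\<lambda>n. f n * u ^ n / N) t"
proof -
  have "summable (\<lambda>n. f n * (u * t) ^ n)"
    using assms by (intro summable_pser) (auto simp: mult_le_one)
  then have "pser f (u * t) / N = (\<Sum>n. f n * (u * t) ^ n / N)"
    unfolding pser_def by (rule suminf_divide[symmetric])
  also have "\<dots> = pser (\<lambda>n. f n * u ^ n / N) t"
    unfolding pser_def by (simp add: power_mult_distrib algebra_simps)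
  finally show ?thesis .
qed

lemma pser_coeff_1_scaled_le:
  fixes f :: "nat \<Rightarrow> real"
  assumes f: "\<And>m. 0 \<le> f m" "summable f" and y: "0 < y" "y \<le> 1"
  shows "f 1 * sqrt y / sqrt (pser f y) \<le> sqrt (pser f 1)"
proof (cases "f 1 = 0")
  case False
  then have pos: "0 < sqrt (f 1) * sqrt y" using f(1)[of 1] y by simp
  have "f 1 * y \<le> pser f y"
    using pser_term_le[OF f, of y 1] y by simp
  then have le: "sqrt (f 1) * sqrt y \<le> sqrt (pser f y)"
    unfolding real_sqrt_mult[symmetric] by (rule real_sqrt_le_mono)
  then have "f 1 * sqrt y / sqrt (pser f y) \<le> f 1 * sqrt y / (sqrt (f 1) * sqrt y)"
  proof (rule divide_left_mono)
    have "0 < sqrt (pser f y)" using pos le by linarith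
    then show "0 < sqrt (pser f y) * (sqrt (f 1) * sqrt y)"
      using pos by (rule mult_pos_pos)
  qed (use le f(1)[of 1] y in auto)
  also have "\<dots> = sqrt (f 1)"
    using pos f(1)[of 1] y by (simp add: real_div_sqrt)
  also have "\<dots> \<le> sqrt (pser f 1)"
    using pser_term_le[OF f, of 1 1] by simp
  finally show ?thesis .
qed (use pser_nonneg[OF f] in simp)

text \<open>The difference quotient \<open>(pser f 1 - pser f x) / (1 - x)\<close>, written as a series that
  stays meaningful at \<open>x = 1\<close>, where it becomes the derivative \<open>\<Sum>m. m * f m\<close>.\<close>

definition pser_dquot :: "(nat \<Rightarrow> real) \<Rightarrow> real \<Rightarrow> real" where
  "pser_dquot f x = (\<Sum>m. f m * (\<Sum>j<m. x ^ j))"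

lemma geometric_sum_le_card:
  assumes "0 \<le> (x::real)" "x \<le> 1"
  shows "(\<Sum>j<m. x ^ j) \<le> real m"
proof -
  have "(\<Sum>j<m. x ^ j) \<le> (\<Sum>j<m. 1)"
    using assms by (intro sum_mono) (auto simp: power_le_one)
  then show ?thesis by simp
qed

lemma pser_dquot_term_bound:
  assumes "0 \<le> f m" "0 \<le> (x::real)" "x \<le> 1"
  shows "norm (f m * (\<Sum>j<m. x ^ j)) \<le> real m * f m"
proof -
  have "0 \<le> (\<Sum>j<m. x ^ j)" using assms by (intro sum_nonneg) auto
  then show ?thesis
    using assms geometric_sum_le_card[OF assms(2,3), of m]
      mult_left_mono[of "\<Sum>j<m. x ^ j" "real m" "f m"]
    by (simp add: abs_mult mult.commute)
qed

lemma summable_pser_dquot: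
  fixes f :: "nat \<Rightarrow> real"
  assumes "\<And>m. 0 \<le> f m" "summable (\<lambda>m. real m * f m)" "0 \<le> x" "x \<le> 1"
  shows "summable (\<lambda>m. f m * (\<Sum>j<m. x ^ j))"
  using assms by (intro summable_comparison_test'[OF assms(2)] pser_dquot_term_bound)

lemma continuous_on_pser_dquot:
  assumes "\<And>m. 0 \<le> f m" "summable (\<lambda>m. real m * f m)"
  shows "continuous_on {0..1} (pser_dquot f)"
proof -
  have "uniform_limit {0..1} (\<lambda>n x. \<Sum>i<n. f i * (\<Sum>j<i. x ^ j)) (pser_dquot f) sequentially"
    unfolding pser_dquot_def
    using assms by (intro Weierstrass_m_test[OF _ assms(2)] pser_dquot_term_bound) auto
  then show ?thesis
    by (rule uniform_limit_theorem[rotated]) (auto intro!: always_eventually continuous_intros)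
qed

lemma pser_1_minus_pser:
  fixes f :: "nat \<Rightarrow> real"
  assumes "\<And>m. 0 \<le> f m" "summable f" "summable (\<lambda>m. real m * f m)" "0 \<le> x" "x \<le> 1"
  shows "pser f 1 - pser f x = (1 - x) * pser_dquot f x"
proof -
  have "(\<lambda>m. f m * 1 ^ m - f m * x ^ m) sums (pser f 1 - pser f x)"
    using assms by (intro sums_diff pser_sums) auto
  moreover have "(\<lambda>m. f m * 1 ^ m - f m * x ^ m) = (\<lambda>m. (1 - x) * (f m * (\<Sum>j<m. x ^ j)))"
  proof
    fix m
    have "f m * 1 ^ m - f m * x ^ m = f m * (1 - x ^ m)" by (simp add: algebra_simps)
    then show "f m * 1 ^ m - f m * x ^ m = (1 - x) * (f m * (\<Sum>j<m. x ^ j))"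
      unfolding one_diff_power_eq by (simp add: algebra_simps)
  qed
  moreover have "(\<lambda>m. (1 - x) * (f m * (\<Sum>j<m. x ^ j))) sums ((1 - x) * pser_dquot f x)"
    unfolding pser_dquot_def using assms
    by (intro sums_mult summable_sums summable_pser_dquot) auto
  ultimately show ?thesis using sums_unique2 by metis
qed

lemma pser_dquot_1: "pser_dquot f 1 = (\<Sum>m. real m * f m)"
  unfolding pser_dquot_def by (simp add: mult.commute)

definition seq_conv :: "(nat \<Rightarrow> real) \<Rightarrow> (nat \<Rightarrow> real) \<Rightarrow> nat \<Rightarrow> real" where
  "seq_conv f g n = (\<Sum>i\<le>n. f i * g (n - i))"

lemma seq_conv_nonneg: "(\<And>m. 0 \<le> f m) \<Longrightarrow> (\<And>m. 0 \<le> g m) \<Longrightarrow> 0 \<le> seq_conv f g n"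
  unfolding seq_conv_def by (intro sum_nonneg mult_nonneg_nonneg) auto

lemma seq_conv_0 [simp]: "seq_conv f g 0 = f 0 * g 0"
  unfolding seq_conv_def by simp

lemma pser_seq_conv_sums:
  assumes f: "\<And>m. 0 \<le> f m" "summable f" and g: "\<And>m. 0 \<le> g m" "summable g"
    and x: "0 \<le> x" "x \<le> 1"
  shows "(\<lambda>n. seq_conv f g n * x ^ n) sums (pser f x * pser g x)"
proof -
  have "summable (\<lambda>k. norm (f k * x ^ k))" "summable (\<lambda>k. norm (g k * x ^ k))"
    using summable_pser[OF f x] summable_pser[OF g x] f g x by (simp_all add: abs_mult)
  from Cauchy_product_sums[OF this]
  have "(\<lambda>k. \<Sum>i\<le>k. (f i * x ^ i) * (g (k - i) * x ^ (k - i))) sums (pser f x * pser g x)"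
    unfolding pser_def .
  moreover have "(\<Sum>i\<le>k. (f i * x ^ i) * (g (k - i) * x ^ (k - i))) = seq_conv f g k * x ^ k" for k
    unfolding seq_conv_def sum_distrib_right
    by (intro sum.cong refl) (simp add: power_add[symmetric] algebra_simps)
  ultimately show ?thesis by simp
qed

lemma summable_seq_conv:
  assumes "\<And>m. 0 \<le> f m" "summable f" "\<And>m. 0 \<le> g m" "summable g"
  shows "summable (seq_conv f g)"
  using sums_summable[OF pser_seq_conv_sums[OF assms, of 1]] by simp

lemma pser_seq_conv:
  assumes "\<And>m. 0 \<le> f m" "summable f" "\<And>m. 0 \<le> g m" "summable g" "0 \<le> x" "x \<le> 1"
  shows "pser (seq_conv f g) x = pser f x * pser g x"
  using sums_unique[OF pser_seq_conv_sums[OF assms]] unfolding pser_def by simp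

section \<open>Chords to the right end point and weighted quotients\<close>

definition chord :: "(real \<Rightarrow> real) \<Rightarrow> real \<Rightarrow> real \<Rightarrow> real" where
  "chord g x y = ((1 - y) * g x + (y - x) * g 1) / (1 - x)"

lemma chord_add: "chord (\<lambda>b. g b + h b) x y = chord g x y + chord h x y"
  unfolding chord_def add_divide_distrib[symmetric] by (simp add: algebra_simps)

lemma chord_diff: "chord (\<lambda>b. g b - h b) x y = chord g x y - chord h x y"
  unfolding chord_def diff_divide_distrib[symmetric] by (simp add: algebra_simps)

lemma chord_cmult: "chord (\<lambda>b. r * g b) x y = r * chord g x y"
  unfolding chord_def by (simp add: algebra_simps)

lemma chord_mono:
  assumes "x \<le> y" "y \<le> 1" "x < 1" "g x \<le> h x" "g 1 \<le> h 1"
  shows "chord g x y \<le> chord h x y"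
  unfolding chord_def using assms
  by (intro divide_right_mono add_mono mult_left_mono) auto

lemma chord_cong: "g x = h x \<Longrightarrow> g 1 = h 1 \<Longrightarrow> chord g x y = chord h x y"
  unfolding chord_def by simp

lemma chord_right_zero: "g 1 = 0 \<Longrightarrow> chord g x y = (1 - y) / (1 - x) * g x"
  unfolding chord_def by simp

lemma chord_sums:
  assumes "(\<lambda>n. u n x) sums U x" "(\<lambda>n. u n 1) sums U 1"
  shows "(\<lambda>n. chord (u n) x y) sums chord U x y"
  unfolding chord_def by (intro sums_divide sums_add sums_mult assms)

lemma convex_below_chord:
  assumes "convex_on {x..1} g" "x \<le> y" "y \<le> 1" "x < 1"
  shows "g y \<le> chord g x y"
  using convex_onD_Icc'[OF assms(1), of y] assms
  by (simp add: chord_def field_simps)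

lemma sqrt_power_below_chord:
  assumes "0 < x" "x \<le> y" "y < 1" "k \<noteq> 1"
  shows "sqrt y ^ k \<le> chord (\<lambda>b. sqrt b ^ k) x y"
proof (cases "k = 0")
  case True
  then show ?thesis using assms by (simp add: chord_def)
next
  case False
  have "convex_on {0<..} (\<lambda>b. b powr (real k / 2))"
    using False assms(4) by (intro powr_convex) auto
  then have "convex_on {x..1} (\<lambda>b. b powr (real k / 2))"
    by (rule convex_on_subset) (use assms in auto)
  moreover have "sqrt b ^ k = b powr (real k / 2)" if "0 < b" for b
    using that by (simp add: powr_half_sqrt[symmetric] powr_realpow[symmetric] powr_powr)
  ultimately show ?thesis
    using convex_below_chord[of x "\<lambda>b. b powr (real k / 2)" y] assms
    by (simp add: chord_def)
qed

lemma chord_sqrt_le: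
  assumes "0 < x" "x \<le> y" "y < 1"
  shows "chord sqrt x y \<le> sqrt y"
proof -
  obtain u v where xy: "x = u^2" "y = v^2" and uv: "0 < u" "u \<le> v" "v < 1"
    using assms by (metis real_sqrt_ge_zero real_sqrt_le_iff real_sqrt_less_iff real_sqrt_gt_zero
        real_sqrt_lt_1_iff real_sqrt_pow2 less_le_trans order.strict_implies_order)
  have D: "0 < 1 - u^2" using uv by (simp add: power_less_one_iff)
  have "chord sqrt x y = ((1 - v^2) * u + (v^2 - u^2)) / (1 - u^2)"
    using uv by (simp add: chord_def xy)
  also have "\<dots> \<le> v"
  proof -
    have "v * (1 - u^2) - ((1 - v^2) * u + (v^2 - u^2)) = (v - u) * (1 - u) * (1 - v)"
      by (simp add: algebra_simps power2_eq_square)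
    moreover have "0 \<le> (v - u) * (1 - u) * (1 - v)" using uv by simp
    ultimately show ?thesis using D by (simp add: divide_le_eq)
  qed
  finally show ?thesis using uv by (simp add: xy)
qed

lemma inv_sqrt_below_chord:
  assumes "0 < x" "x < y" "y < 1"
  shows "1 / sqrt y < chord (\<lambda>b. 1 / sqrt b) x y"
proof -
  obtain u v where xy: "x = u^2" "y = v^2" and uv: "0 < u" "u < v" "v < 1"
    using assms by (metis real_sqrt_gt_zero real_sqrt_less_iff real_sqrt_lt_1_iff real_sqrt_pow2
        less_trans order.strict_implies_order)
  have D: "0 < 1 - u^2" using uv by (simp add: power_less_one_iff)
  have "1 / v < ((1 - v^2) + u * (v^2 - u^2)) / (u * (1 - u^2))"
  proof -
    have "v * ((1 - v^2) + u * (v^2 - u^2)) - u * (1 - u^2) = (v - u) * (1 - u) * (1 - v) * (1 + u + v)"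
      by (simp add: algebra_simps power2_eq_square)
    moreover have "0 < (v - u) * (1 - u) * (1 - v) * (1 + u + v)" using uv by simp
    ultimately show ?thesis using D uv by (simp add: field_simps)
  qed
  also have "\<dots> = chord (\<lambda>b. 1 / sqrt b) x y"
    using uv D by (simp add: chord_def xy field_simps)
  finally show ?thesis using uv by (simp add: xy)
qed

lemma one_minus_div_sqrt_below_chord:
  assumes "0 < x" "x < y" "y < 1"
  shows "(1 - y) / sqrt y < chord (\<lambda>b. (1 - b) / sqrt b) x y"
proof -
  have split: "(1 - b) / sqrt b = 1 / sqrt b - sqrt b" if "0 < b" for b :: real
    using that by (simp add: field_simps)
  have "(1 - y) / sqrt y = 1 / sqrt y - sqrt y" using split assms by simp
  also have "\<dots> < chord (\<lambda>b. 1 / sqrt b) x y - chord sqrt x y"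
    using inv_sqrt_below_chord[OF assms] chord_sqrt_le[of x y] assms by simp
  also have "\<dots> = chord (\<lambda>b. (1 - b) / sqrt b) x y"
    unfolding chord_diff[symmetric] using split assms by (intro chord_cong) auto
  finally show ?thesis .
qed

lemma power_diff_div_sqrt_below_chord:
  assumes "0 < x" "x < y" "y < 1"
  shows "(y ^ m - y) / sqrt y \<le> chord (\<lambda>b. (b ^ m - b) / sqrt b) x y"
    and "m = 0 \<Longrightarrow> (y ^ m - y) / sqrt y < chord (\<lambda>b. (b ^ m - b) / sqrt b) x y"
proof -
  have m0: "(y ^ 0 - y) / sqrt y < chord (\<lambda>b. (b ^ 0 - b) / sqrt b) x y"
    using one_minus_div_sqrt_below_chord[OF assms] by simp
  then show "m = 0 \<Longrightarrow> (y ^ m - y) / sqrt y < chord (\<lambda>b. (b ^ m - b) / sqrt b) x y"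
    by simp
  show "(y ^ m - y) / sqrt y \<le> chord (\<lambda>b. (b ^ m - b) / sqrt b) x y"
  proof (cases "m = 0")
    case True
    then show ?thesis using m0 by simp
  next
    case False
    have split: "(b ^ m - b) / sqrt b = sqrt b ^ (2 * m - 1) - sqrt b" if "0 < b" for b
    proof -
      have "b ^ m = (sqrt b ^ 2) ^ m" using that by simp
      also have "\<dots> = sqrt b ^ Suc (2 * m - 1)"
        using False by (simp add: power_mult[symmetric])
      finally have "b ^ m = sqrt b ^ (2 * m - 1) * sqrt b" by (simp add: power_Suc2)
      then show ?thesis using that by (simp add: field_simps)
    qed
    have "(y ^ m - y) / sqrt y = sqrt y ^ (2 * m - 1) - sqrt y"
      using split assms by simp
    also have "\<dots> \<le> chord (\<lambda>b. sqrt b ^ (2 * m - 1)) x y - chord sqrt x y"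
    proof (cases "m = 1")
      case False
      then have "2 * m - 1 \<noteq> 1" using \<open>m \<noteq> 0\<close> by simp
      then show ?thesis
        using sqrt_power_below_chord[of x y "2 * m - 1"] chord_sqrt_le[of x y] assms by simp
    qed simp
    also have "\<dots> = chord (\<lambda>b. (b ^ m - b) / sqrt b) x y"
      unfolding chord_diff[symmetric] using split assms by (intro chord_cong) auto
    finally show ?thesis .
  qed
qed

lemma power_diff_div_weight_antimono:
  assumes "0 < x" "x < y" "y < 1"
  shows "(y ^ m - y) / (sqrt y * (1 - y)) \<le> (x ^ m - x) / (sqrt x * (1 - x))"
    and "m = 0 \<Longrightarrow> (y ^ m - y) / (sqrt y * (1 - y)) < (x ^ m - x) / (sqrt x * (1 - x))"
proof -
  have sqrt: "0 < sqrt x" "sqrt x < sqrt y" using assms by auto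
  show "m = 0 \<Longrightarrow> (y ^ m - y) / (sqrt y * (1 - y)) < (x ^ m - x) / (sqrt x * (1 - x))"
    using assms sqrt by (simp add: divide_strict_left_mono)
  show "(y ^ m - y) / (sqrt y * (1 - y)) \<le> (x ^ m - x) / (sqrt x * (1 - x))"
  proof (cases "m = 0")
    case True
    then show ?thesis using assms sqrt by (simp add: divide_left_mono)
  next
    case False
    have geom: "(b ^ m - b) / (sqrt b * (1 - b)) = - (sqrt b * (\<Sum>i<m - 1. b ^ i))"
      if "0 < b" "b < 1" for b
    proof -
      have "b ^ m - b = - (b * (1 - b ^ (m - 1)))"
        using False by (cases m) (simp_all add: algebra_simps)
      also have "\<dots> = - ((b * (\<Sum>i<m - 1. b ^ i)) * (1 - b))"
        by (simp add: one_diff_power_eq)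
      finally have "(b ^ m - b) / (sqrt b * (1 - b)) = - (b / sqrt b * (\<Sum>i<m - 1. b ^ i))"
        using that by simp
      then show ?thesis using that by (simp add: real_div_sqrt)
    qed
    have "sqrt x * (\<Sum>i<m - 1. x ^ i) \<le> sqrt y * (\<Sum>i<m - 1. y ^ i)"
      using assms sqrt by (intro mult_mono sum_mono power_mono sum_nonneg) auto
    then show ?thesis using geom[of x] geom[of y] assms by simp
  qed
qed

lemma sums_less_first_term:
  fixes u v :: "nat \<Rightarrow> real"
  assumes "u sums s" "v sums t" "\<And>m. u m \<le> v m" "u 0 < v 0"
  shows "s < t"
proof -
  have "(\<lambda>m. v m - u m) sums (t - s)" using assms by (intro sums_diff)
  moreover have "0 < (\<Sum>m. v m - u m)"
    using assms calculation by (intro suminf_pos2[of _ 0]) (auto simp: sums_iff)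
  ultimately show ?thesis by (simp add: sums_iff)
qed

lemma pser_minus_linear_sums:
  fixes f :: "nat \<Rightarrow> real"
  assumes "\<And>m. 0 \<le> f m" "summable f" "0 \<le> b" "b \<le> 1"
  shows "(\<lambda>m. f m * ((b ^ m - b) / w)) sums ((pser f b - b * pser f 1) / w)"
proof -
  have "(\<lambda>m. (f m * b ^ m - b * f m) / w) sums ((pser f b - b * pser f 1) / w)"
    using assms pser_sums[OF assms(1,2), of 1]
    by (intro sums_divide sums_diff pser_sums sums_mult) auto
  then show ?thesis by (simp add: algebra_simps diff_divide_distrib)
qed

lemma pser_minus_linear_div_sqrt_below_chord:
  fixes f :: "nat \<Rightarrow> real"
  assumes f: "\<And>m. 0 \<le> f m" "summable f" "0 < f 0" and xy: "0 < x" "x < y" "y < 1"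
  defines "g \<equiv> \<lambda>b. (pser f b - b * pser f 1) / sqrt b"
  shows "g y < chord g x y"
proof (rule sums_less_first_term)
  show "(\<lambda>m. f m * ((y ^ m - y) / sqrt y)) sums g y"
    unfolding g_def using xy by (intro pser_minus_linear_sums f) auto
  have "(\<lambda>m. f m * chord (\<lambda>b. (b ^ m - b) / sqrt b) x y) = (\<lambda>m. chord (\<lambda>b. f m * ((b ^ m - b) / sqrt b)) x y)"
    by (simp only: chord_cmult)
  moreover have "(\<lambda>m. chord (\<lambda>b. f m * ((b ^ m - b) / sqrt b)) x y) sums chord g x y"
    unfolding g_def using xy by (intro chord_sums pser_minus_linear_sums f) auto
  ultimately show "(\<lambda>m. f m * chord (\<lambda>b. (b ^ m - b) / sqrt b) x y) sums chord g x y"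
    by simp
  show "f m * ((y ^ m - y) / sqrt y) \<le> f m * chord (\<lambda>b. (b ^ m - b) / sqrt b) x y" for m
    using power_diff_div_sqrt_below_chord(1)[OF xy] f(1) by (rule mult_left_mono)
  show "f 0 * ((y ^ 0 - y) / sqrt y) < f 0 * chord (\<lambda>b. (b ^ 0 - b) / sqrt b) x y"
    using power_diff_div_sqrt_below_chord(2)[OF xy] f(3) by (intro mult_strict_left_mono) auto
qed

lemma pser_minus_linear_div_weight_strict_antimono:
  fixes f :: "nat \<Rightarrow> real"
  assumes f: "\<And>m. 0 \<le> f m" "summable f" "0 < f 0" and "0 \<le> K"
    and xy: "0 < x" "x < y" "y < 1"
  defines "g \<equiv> \<lambda>b. (pser f b - b * (pser f 1 + K)) / (sqrt b * (1 - b))"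
  shows "g y < g x"
proof -
  define h where "h b = (pser f b - b * pser f 1) / (sqrt b * (1 - b))" for b
  have "h y < h x"
  proof (rule sums_less_first_term)
    show "(\<lambda>m. f m * ((y ^ m - y) / (sqrt y * (1 - y)))) sums h y"
      "(\<lambda>m. f m * ((x ^ m - x) / (sqrt x * (1 - x)))) sums h x"
      unfolding h_def using xy by (intro pser_minus_linear_sums f; simp)+
    show "f m * ((y ^ m - y) / (sqrt y * (1 - y))) \<le> f m * ((x ^ m - x) / (sqrt x * (1 - x)))" for m
      using power_diff_div_weight_antimono(1)[OF xy] f(1) by (rule mult_left_mono)
    show "f 0 * ((y ^ 0 - y) / (sqrt y * (1 - y))) < f 0 * ((x ^ 0 - x) / (sqrt x * (1 - x)))"
      using power_diff_div_weight_antimono(2)[OF xy] f(3) by (intro mult_strict_left_mono) auto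
  qed
  moreover have "K * (sqrt x / (1 - x)) \<le> K * (sqrt y / (1 - y))"
    using xy \<open>0 \<le> K\<close> by (intro mult_left_mono frac_le) auto
  moreover have "g b = h b - K * (sqrt b / (1 - b))" if "0 < b" for b
  proof -
    have "g b = h b - K * (b / sqrt b / (1 - b))"
      unfolding g_def h_def diff_divide_distrib by (simp add: add_divide_distrib algebra_simps)
    then show ?thesis using that by (simp add: real_div_sqrt)
  qed
  ultimately show ?thesis using xy by simp
qed

lemma pser_sqrt_minus_sqrt_below_chord:
  fixes e :: "nat \<Rightarrow> real"
  assumes e: "\<And>n. 0 \<le> e n" "summable e" "e 1 \<le> K" and xy: "0 < x" "x < y" "y < 1"
  defines "g \<equiv> \<lambda>b. pser e (sqrt b) - K * sqrt b"
  shows "g y \<le> chord g x y"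
proof -
  define u where "u n b = e n * sqrt b ^ n - (if n = 1 then K * sqrt b else 0)" for n b
  have sums: "(\<lambda>n. u n b) sums g b" if "0 \<le> b" "b \<le> 1" for b
  proof -
    have "(\<lambda>n. if n = 1 then K * sqrt b else 0) sums (K * sqrt b)"
      using sums_single[of 1 "\<lambda>_. K * sqrt b"] by simp
    then show ?thesis
      unfolding u_def g_def using that by (intro sums_diff pser_sums e) auto
  qed
  have "u n y \<le> chord (u n) x y" for n
  proof (cases "n = 1")
    case True
    have "(e 1 - K) * sqrt y \<le> (e 1 - K) * chord sqrt x y"
      using e(3) chord_sqrt_le[of x y] xy by (intro mult_left_mono_neg) auto
    moreover have "u 1 = (\<lambda>b. (e 1 - K) * sqrt b)" by (simp add: u_def fun_eq_iff algebra_simps)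
    ultimately show ?thesis using True by (simp only: chord_cmult)
  next
    case False
    then have "u n = (\<lambda>b. e n * sqrt b ^ n)" by (simp add: u_def fun_eq_iff)
    then show ?thesis
      using sqrt_power_below_chord[of x y n] e(1)[of n] xy False
      by (simp add: chord_cmult mult_left_mono)
  qed
  then show ?thesis
    using xy by (intro sums_le[OF _ sums chord_sums[OF sums sums]]) auto
qed

section \<open>Eigenvalues of a symmetric 2-by-2 matrix\<close>

text \<open>For the matrix with rows \<open>(p, k)\<close> and \<open>(k, q)\<close>, twice the eigenvalues are
  \<open>p + q \<plusminus> sqrt ((q - p)\<^sup>2 + 4 * k\<^sup>2)\<close>.\<close>

lemma sqrt_square_add_diff_le:
  fixes X Y a :: real
  assumes "0 \<le> a"
  shows "sqrt (X^2 + a) - sqrt (Y^2 + a) \<le> \<bar>X - Y\<bar>"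
proof -
  define S where "S = sqrt (Y^2 + a)"
  have S: "0 \<le> S" "S^2 = Y^2 + a" "\<bar>Y\<bar> \<le> S"
    using assms by (auto simp: S_def intro: real_le_rsqrt)
  have "\<bar>X\<bar>^2 \<le> (\<bar>X - Y\<bar> + \<bar>Y\<bar>)^2" by (intro power_mono) auto
  also have "\<dots> \<le> \<bar>X - Y\<bar>^2 + 2 * \<bar>X - Y\<bar> * S + Y^2"
    using S by (simp add: power2_sum mult_left_mono)
  finally have "X^2 + a \<le> (\<bar>X - Y\<bar> + S)^2"
    using S by (simp add: power2_sum)
  then have "sqrt (X^2 + a) \<le> \<bar>X - Y\<bar> + S"
    using S by (intro real_le_lsqrt) auto
  then show ?thesis unfolding S_def by simp
qed

lemma min_eigenvalue_strict_mono:
  fixes p1 p2 q1 q2 e1 e2 :: real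
  assumes "p2 < p1" "q2 < q1" "0 \<le> e1" "e1 \<le> e2"
  shows "p2 + q2 - sqrt ((q2 - p2)^2 + 4 * e2) < p1 + q1 - sqrt ((q1 - p1)^2 + 4 * e1)"
proof -
  have "sqrt ((q2 - p2)^2 + 4 * e1) \<le> sqrt ((q2 - p2)^2 + 4 * e2)" using assms by simp
  moreover have "sqrt ((q1 - p1)^2 + 4 * e1) - sqrt ((q2 - p2)^2 + 4 * e1) \<le> \<bar>(q1 - p1) - (q2 - p2)\<bar>"
    using assms by (intro sqrt_square_add_diff_le) simp
  moreover have "\<bar>(q1 - p1) - (q2 - p2)\<bar> < (p1 - p2) + (q1 - q2)"
    using assms by (simp add: abs_less_iff)
  ultimately show ?thesis by linarith
qed

lemma unit_weights_strict_mono: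
  fixes c s p q p' q' :: real
  assumes "c^2 + s^2 = 1" "p < p'" "q < q'"
  shows "c^2 * p + s^2 * q < c^2 * p' + s^2 * q'"
proof -
  have "0 < c^2 \<or> 0 < s^2" using assms(1) by fastforce
  then show ?thesis
  proof
    assume "0 < c^2"
    then show ?thesis
      using assms by (intro add_less_le_mono mult_strict_left_mono mult_left_mono) auto
  next
    assume "0 < s^2"
    then show ?thesis
      using assms by (intro add_le_less_mono mult_strict_left_mono mult_left_mono) auto
  qed
qed

lemma rayleigh_le_max_eigenvalue:
  fixes c s p q k :: real
  assumes "c^2 + s^2 = 1"
  shows "2 * (c^2 * p + s^2 * q + 2 * c * s * k) \<le> p + q + sqrt ((q - p)^2 + 4 * k^2)"
proof -
  have "(c^2 - s^2) * (p - q) + (2 * c * s) * (2 * k) \<le> sqrt ((p - q)^2 + (2 * k)^2)"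
  proof (rule real_le_rsqrt)
    have "((c^2 - s^2)^2 + (2 * c * s)^2) * ((p - q)^2 + (2 * k)^2)
          - ((c^2 - s^2) * (p - q) + (2 * c * s) * (2 * k))^2
        = ((c^2 - s^2) * (2 * k) - (2 * c * s) * (p - q))^2"
      by (simp add: algebra_simps power2_eq_square)
    moreover have "(c^2 - s^2)^2 + (2 * c * s)^2 = (c^2 + s^2)^2"
      by (simp add: power2_eq_square algebra_simps)
    ultimately show "((c^2 - s^2) * (p - q) + (2 * c * s) * (2 * k))^2 \<le> (p - q)^2 + (2 * k)^2"
      using assms by (metis diff_ge_0_iff_ge mult_1 one_power2 zero_le_power2)
  qed
  moreover have "2 * (c^2 * p + s^2 * q + 2 * c * s * k)
      = (c^2 + s^2) * (p + q) + ((c^2 - s^2) * (p - q) + (2 * c * s) * (2 * k))"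
    by (simp add: algebra_simps power2_eq_square)
  moreover have "(p - q)^2 + (2 * k)^2 = (q - p)^2 + 4 * k^2"
    by (simp add: power2_eq_square algebra_simps)
  ultimately show ?thesis using assms by simp
qed

lemma max_eigenvalue_attained:
  fixes p q k :: real
  assumes k: "0 \<le> k"
  obtains c s where "0 \<le> c" "0 \<le> s" "c^2 + s^2 = 1"
    "2 * (c^2 * p + s^2 * q + 2 * c * s * k) = p + q + sqrt ((q - p)^2 + 4 * k^2)"
proof (cases "(p - q)^2 + 4 * k^2 = 0")
  case True
  then have "p = q" "k = 0" by (auto simp: add_nonneg_eq_0_iff)
  then show ?thesis by (intro that[of 1 0]) auto
next
  case False
  define \<rho> where "\<rho> = sqrt ((p - q)^2 + 4 * k^2)"
  have "0 \<le> (p - q)^2 + 4 * k^2" by simp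
  then have "0 < (p - q)^2 + 4 * k^2" using False by linarith
  then have rho: "\<rho> > 0" "\<rho>^2 = (p - q)^2 + 4 * k^2"
    unfolding \<rho>_def by auto
  have "\<bar>p - q\<bar> \<le> \<rho>" unfolding \<rho>_def by (rule real_le_rsqrt) simp
  then have X: "-1 \<le> (p - q) / \<rho>" "(p - q) / \<rho> \<le> 1"
    using rho by (auto simp: field_simps abs_le_iff)
  \<comment> \<open>\<open>(c, s)\<close> is the unit eigenvector of the larger eigenvalue, from the half-angle formulas\<close>
  define c where "c = sqrt ((1 + (p - q) / \<rho>) / 2)"
  define s where "s = sqrt ((1 - (p - q) / \<rho>) / 2)"
  have c2: "c^2 = (1 + (p - q) / \<rho>) / 2" and s2: "s^2 = (1 - (p - q) / \<rho>) / 2"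
    unfolding c_def s_def using X by simp_all
  have cs: "c * s = k / \<rho>"
  proof -
    have "c * s = sqrt ((1 - ((p - q) / \<rho>)^2) / 4)" unfolding c_def s_def
      by (simp add: real_sqrt_mult[symmetric] algebra_simps power2_eq_square)
    also have "(1 - ((p - q) / \<rho>)^2) / 4 = (k / \<rho>)^2"
      using rho by (simp add: field_simps power2_eq_square)
    finally show ?thesis using k rho by simp
  qed
  have "2 * (c^2 * p + s^2 * q + 2 * c * s * k) = p + q + ((p - q)^2 + 4 * k^2) / \<rho>"
    unfolding c2 s2 mult.assoc[symmetric] using rho
    by (simp add: cs field_simps power2_eq_square)
  also have "((p - q)^2 + 4 * k^2) / \<rho> = \<rho>"
    using rho by (metis nonzero_mult_div_cancel_right power2_eq_square less_irrefl)
  also have "\<rho> = sqrt ((q - p)^2 + 4 * k^2)"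
    unfolding \<rho>_def by (simp add: power2_commute)
  finally have "2 * (c^2 * p + s^2 * q + 2 * c * s * k) = p + q + sqrt ((q - p)^2 + 4 * k^2)" .
  moreover have "0 \<le> c" "0 \<le> s" "c^2 + s^2 = 1"
    using X c2 s2 by (simp_all add: c_def s_def add_divide_distrib[symmetric])
  ultimately show ?thesis by (intro that[of c s])
qed

section \<open>One component of the equation\<close>

text \<open>\<open>fa, fb, fc, fd\<close> are the coefficient sequences of \<open>A\<^sub>i, B\<^sub>i, C\<^sub>i, D\<^sub>i\<close> for \<open>K = 1\<close>.
  Then \<open>F\<^sub>i = QQ - PP\<close>, \<open>R\<^sub>i = RR\<close>, and the \<open>i\<close>-th summand of \<open>(E\<^sub>x)\<close> is \<open>branch (x i)\<close>.
  Assumption (A)(iv) says \<open>fa 0 * fd 0 = 0\<close>, so \<open>AD_quot z = A z * D z / z\<close> is again a power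
  series with nonnegative coefficients.\<close>

locale rate_component =
  fixes fa fb fc fd :: "nat \<Rightarrow> real"
  assumes fa_nonneg: "\<And>m. 0 \<le> fa m" and fb_nonneg: "\<And>m. 0 \<le> fb m"
    and fc_nonneg: "\<And>m. 0 \<le> fc m" and fd_nonneg: "\<And>m. 0 \<le> fd m"
    and summable_fa: "summable fa" and summable_fb: "summable fb"
    and summable_fc: "summable fc" and summable_fd: "summable fd"
    and A_1_pos: "0 < pser fa 1" and D_1_pos: "0 < pser fd 1"
    and fa_0_fd_0: "fa 0 = 0 \<or> fd 0 = 0"
    and fb_0_eq_fc_0: "fb 0 = fc 0" and fb_0_pos: "0 < fb 0"
begin

abbreviation "A \<equiv> pser fa"
abbreviation "B \<equiv> pser fb"
abbreviation "C \<equiv> pser fc"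
abbreviation "D \<equiv> pser fd"

definition "PP z = B z - z * (A 1 + B 1)"
definition "QQ z = C z - z * (C 1 + D 1)"
definition "RR z = sqrt ((QQ z - PP z)^2 + 4 * A z * D z)"
definition "branch s z = PP z + QQ z + s * RR z"

definition "ad n = seq_conv fa fd (Suc n)"
abbreviation "AD_quot \<equiv> pser ad"

lemma fc_0_pos: "0 < fc 0"
  using fb_0_pos fb_0_eq_fc_0 by simp

lemma ad_nonneg: "0 \<le> ad n"
  unfolding ad_def by (rule seq_conv_nonneg[OF fa_nonneg fd_nonneg])

lemma summable_ad: "summable ad"
  unfolding ad_def using summable_seq_conv[OF fa_nonneg summable_fa fd_nonneg summable_fd]
  by (simp add: summable_Suc_iff)

lemma AD_quot_nonneg: "0 \<le> z \<Longrightarrow> z \<le> 1 \<Longrightarrow> 0 \<le> AD_quot z"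
  by (rule pser_nonneg[OF ad_nonneg summable_ad])

lemma A_mult_D:
  assumes "0 \<le> z" "z \<le> 1"
  shows "A z * D z = z * AD_quot z"
proof -
  have "A z * D z = pser (seq_conv fa fd) z"
    using pser_seq_conv[OF fa_nonneg summable_fa fd_nonneg summable_fd assms] by simp
  also have "\<dots> = z * AD_quot z"
    unfolding ad_def using fa_0_fd_0 assms
    by (intro pser_shift seq_conv_nonneg fa_nonneg fd_nonneg summable_seq_conv
        summable_fa summable_fd) auto
  finally show ?thesis .
qed

lemma AD_quot_1: "AD_quot 1 = A 1 * D 1"
  using A_mult_D[of 1] by simp

lemma A_nonneg: "0 \<le> z \<Longrightarrow> z \<le> 1 \<Longrightarrow> 0 \<le> A z"
  and D_nonneg: "0 \<le> z \<Longrightarrow> z \<le> 1 \<Longrightarrow> 0 \<le> D z"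
  by (simp_all add: pser_nonneg fa_nonneg summable_fa fd_nonneg summable_fd)

lemma PP_1: "PP 1 = - A 1"
  unfolding PP_def by simp

lemma QQ_1: "QQ 1 = - D 1"
  unfolding QQ_def by simp

lemma RR_0: "RR 0 = 0"
  unfolding RR_def PP_def QQ_def using fa_0_fd_0 fb_0_eq_fc_0 by auto

lemma RR_1: "RR 1 = A 1 + D 1"
proof -
  have "(QQ 1 - PP 1)^2 + 4 * A 1 * D 1 = (A 1 + D 1)^2"
    unfolding PP_1 QQ_1 by algebra
  then show ?thesis unfolding RR_def using A_1_pos D_1_pos by simp
qed

lemma RR_nonneg:
  assumes "0 \<le> z" "z \<le> 1"
  shows "0 \<le> RR z"
  unfolding RR_def using A_nonneg[OF assms] D_nonneg[OF assms] by simp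

lemma branch_0: "branch s 0 = 2 * fb 0"
  unfolding branch_def RR_0 PP_def QQ_def using fb_0_eq_fc_0 by simp

lemma branch_1: "branch s 1 = (s - 1) * (A 1 + D 1)"
  unfolding branch_def RR_1 PP_1 QQ_1 by algebra

lemma continuous_on_PP: "continuous_on {0..1} PP"
  and continuous_on_QQ: "continuous_on {0..1} QQ"
  and continuous_on_RR: "continuous_on {0..1} RR"
  unfolding PP_def[abs_def] QQ_def[abs_def] RR_def[abs_def]
  by (intro continuous_intros continuous_on_pser fa_nonneg fb_nonneg fc_nonneg fd_nonneg
      summable_fa summable_fb summable_fc summable_fd)+

lemma continuous_on_branch: "continuous_on {0..1} (branch s)"
  unfolding branch_def[abs_def]
  by (intro continuous_intros continuous_on_PP continuous_on_QQ continuous_on_RR)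

lemma minus_branch_div_weight_strict_antimono:
  assumes xy: "0 < x" "x < y" "y < 1"
  shows "branch (-1) y / (sqrt y * (1 - y)) < branch (-1) x / (sqrt x * (1 - x))"
proof -
  define w where "w b = sqrt b * (1 - b)" for b :: real
  define p q e where "p b = PP b / w b" and "q b = QQ b / w b"
    and "e b = AD_quot b / (1 - b)^2" for b
  \<comment> \<open>after scaling by \<open>w\<close>, the branch is twice the smaller eigenvalue of \<open>((p, sqrt e), (sqrt e, q))\<close>\<close>
  have eigen: "branch (-1) b / w b = p b + q b - sqrt ((q b - p b)^2 + 4 * e b)"
    if b: "0 < b" "b < 1" for b
  proof -
    have w: "0 < w b" "(w b)^2 = b * (1 - b)^2"
      using b by (auto simp: w_def power_mult_distrib)
    have "RR b / w b = sqrt (((QQ b - PP b)^2 + 4 * A b * D b) / (w b)^2)"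
      unfolding RR_def using w(1) by (simp add: real_sqrt_divide)
    also have "((QQ b - PP b)^2 + 4 * A b * D b) / (w b)^2 = (q b - p b)^2 + 4 * e b"
    proof -
      have "(QQ b - PP b)^2 / (w b)^2 = (q b - p b)^2"
        unfolding p_def q_def diff_divide_distrib[symmetric] power_divide ..
      moreover have "4 * A b * D b / (w b)^2 = 4 * e b"
        using A_mult_D[of b] w b by (simp add: e_def mult.assoc)
      ultimately show ?thesis by (simp add: add_divide_distrib)
    qed
    finally show ?thesis
      unfolding branch_def p_def q_def by (simp add: diff_divide_distrib add_divide_distrib)
  qed
  have "p y < p x"
    using pser_minus_linear_div_weight_strict_antimono[OF fb_nonneg summable_fb fb_0_pos _ xy,
        of "A 1"] A_1_pos
    by (simp add: p_def w_def PP_def algebra_simps)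
  moreover have "q y < q x"
    using pser_minus_linear_div_weight_strict_antimono[OF fc_nonneg summable_fc fc_0_pos _ xy,
        of "D 1"] D_1_pos
    by (simp add: q_def w_def QQ_def algebra_simps)
  moreover have "0 \<le> e x" "e x \<le> e y"
    unfolding e_def using xy AD_quot_nonneg[of x] AD_quot_nonneg[of y]
    by (auto intro!: frac_le pser_mono ad_nonneg summable_ad power_mono)
  ultimately have "p y + q y - sqrt ((q y - p y)^2 + 4 * e y) < p x + q x - sqrt ((q x - p x)^2 + 4 * e x)"
    by (rule min_eigenvalue_strict_mono)
  then show ?thesis using eigen[of x] eigen[of y] xy unfolding w_def by simp
qed

text \<open>Twice the Rayleigh quotient of the unit vector \<open>(c, s)\<close> for the matrix with rows
  \<open>(PP b / sqrt b, k)\<close> and \<open>(k, QQ b / sqrt b)\<close>; with \<open>k = sqrt (AD_quot b)\<close> its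
  maximum is \<open>branch 1 b / sqrt b\<close>.\<close>

definition "rayleigh c s k b = 2 * (c^2 * (PP b / sqrt b) + s^2 * (QQ b / sqrt b) + 2 * c * s * k)"

lemma plus_branch_div_sqrt:
  assumes "0 < b" "b \<le> 1"
  shows "branch 1 b / sqrt b
    = PP b / sqrt b + QQ b / sqrt b + sqrt ((QQ b / sqrt b - PP b / sqrt b)^2 + 4 * (sqrt (AD_quot b))^2)"
proof -
  have "RR b / sqrt b = sqrt (((QQ b - PP b)^2 + 4 * A b * D b) / (sqrt b)^2)"
    unfolding RR_def using assms by (simp add: real_sqrt_divide)
  also have "((QQ b - PP b)^2 + 4 * A b * D b) / (sqrt b)^2
      = (QQ b / sqrt b - PP b / sqrt b)^2 + 4 * (sqrt (AD_quot b))^2"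
    using assms A_mult_D[of b] AD_quot_nonneg[of b]
    by (simp add: add_divide_distrib power_divide diff_divide_distrib[symmetric] mult.assoc)
  finally show ?thesis
    unfolding branch_def by (simp add: add_divide_distrib)
qed

lemma rayleigh_le_plus_branch:
  assumes "c^2 + s^2 = 1" "0 \<le> c * s" "k \<le> sqrt (AD_quot b)" "0 < b" "b \<le> 1"
  shows "rayleigh c s k b \<le> branch 1 b / sqrt b"
proof -
  have "rayleigh c s k b \<le> rayleigh c s (sqrt (AD_quot b)) b"
    unfolding rayleigh_def using assms mult_left_mono[OF assms(3,2)] by simp
  also have "\<dots> \<le> branch 1 b / sqrt b"
    unfolding plus_branch_div_sqrt[OF assms(4,5)] rayleigh_def
    by (rule rayleigh_le_max_eigenvalue[OF assms(1)])
  finally show ?thesis .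
qed

lemma rayleigh_attains_plus_branch:
  assumes "0 < b" "b \<le> 1"
  obtains c s where "0 \<le> c" "0 \<le> s" "c^2 + s^2 = 1"
    "rayleigh c s (sqrt (AD_quot b)) b = branch 1 b / sqrt b"
proof -
  have "0 \<le> sqrt (AD_quot b)" using AD_quot_nonneg assms by simp
  from max_eigenvalue_attained[OF this, of "PP b / sqrt b" "QQ b / sqrt b"]
  obtain c s where cs: "0 \<le> c" "0 \<le> s" "c^2 + s^2 = 1"
    and eq: "2 * (c^2 * (PP b / sqrt b) + s^2 * (QQ b / sqrt b) + 2 * c * s * sqrt (AD_quot b))
      = PP b / sqrt b + QQ b / sqrt b + sqrt ((QQ b / sqrt b - PP b / sqrt b)^2 + 4 * (sqrt (AD_quot b))^2)" .
  show ?thesis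
  proof (rule that[OF cs])
    show "rayleigh c s (sqrt (AD_quot b)) b = branch 1 b / sqrt b"
      unfolding rayleigh_def plus_branch_div_sqrt[OF assms] by (rule eq)
  qed
qed

text \<open>A lower bound for \<open>sqrt (AD_quot b)\<close>, exact at \<open>b = y\<close>, whose power series in \<open>sqrt b\<close>
  is nonnegative (Cauchy--Schwarz for the series of \<open>AD_quot\<close>).\<close>

definition "cs_bound y b = (if AD_quot y = 0 then 0 else AD_quot (sqrt y * sqrt b) / sqrt (AD_quot y))"

lemma cs_bound_le:
  assumes "0 \<le> y" "y \<le> 1" "0 \<le> b" "b \<le> 1"
  shows "cs_bound y b \<le> sqrt (AD_quot b)"
proof (cases "AD_quot y = 0")
  case False
  then have "0 < sqrt (AD_quot y)" using AD_quot_nonneg[of y] assms by simp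
  moreover have "AD_quot (sqrt y * sqrt b) \<le> sqrt (AD_quot y) * sqrt (AD_quot b)"
    using pser_sqrt_mult_le[OF ad_nonneg summable_ad] assms by (simp add: real_sqrt_mult)
  ultimately show ?thesis using False by (simp add: cs_bound_def field_simps)
qed (use AD_quot_nonneg assms in \<open>simp add: cs_bound_def\<close>)

lemma cs_bound_diag:
  assumes "0 \<le> y" "y \<le> 1"
  shows "cs_bound y y = sqrt (AD_quot y)"
proof (cases "AD_quot y = 0")
  case False
  then have "0 < AD_quot y" using AD_quot_nonneg[OF assms] by simp
  then show ?thesis using assms by (simp add: cs_bound_def real_div_sqrt)
qed (simp add: cs_bound_def)

lemma cs_bound_below_chord:
  assumes xy: "0 < x" "x < y" "y < 1"
  defines "g \<equiv> \<lambda>b. cs_bound y b - sqrt (A 1 * D 1) * sqrt b"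
  shows "g y \<le> chord g x y"
proof (cases "AD_quot y = 0")
  case True
  have "0 \<le> sqrt (A 1 * D 1)" using A_1_pos D_1_pos by simp
  then show ?thesis
    using True mult_left_mono[OF chord_sqrt_le[of x y]] xy
    by (simp add: g_def cs_bound_def chord_cmult[of "- sqrt (A 1 * D 1)" sqrt, simplified])
next
  case False
  define e where "e n = ad n * sqrt y ^ n / sqrt (AD_quot y)" for n
  have "0 < AD_quot y" using False AD_quot_nonneg[of y] xy by simp
  then have e_nonneg: "0 \<le> e n" for n
    using ad_nonneg xy by (simp add: e_def)
  have summable_e: "summable e"
    unfolding e_def using xy
    by (intro summable_divide summable_pser ad_nonneg summable_ad) auto
  have "e 1 \<le> sqrt (A 1 * D 1)"
    using pser_coeff_1_scaled_le[OF ad_nonneg summable_ad, of y] xy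
    by (simp add: e_def AD_quot_1)
  moreover have "cs_bound y b = pser e (sqrt b)" if "0 \<le> b" "b \<le> 1" for b
    using False pser_mult_divide[OF ad_nonneg summable_ad, of "sqrt y" "sqrt b"] that xy
    by (simp add: cs_bound_def e_def[abs_def])
  ultimately show ?thesis
    using pser_sqrt_minus_sqrt_below_chord[OF e_nonneg summable_e _ xy] xy
    by (simp add: g_def chord_def)
qed

lemma rayleigh_cs_bound_strict_below_chord:
  assumes cs: "0 \<le> c" "0 \<le> s" "c^2 + s^2 = 1" and xy: "0 < x" "x < y" "y < 1"
  defines "G \<equiv> \<lambda>b. rayleigh c s (cs_bound y b) b"
  shows "G y < chord G x y"
proof -
  define P0 Q0 Lt where "P0 b = (B b - b * B 1) / sqrt b"
    and "Q0 b = (C b - b * C 1) / sqrt b"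
    and "Lt b = cs_bound y b - sqrt (A 1 * D 1) * sqrt b" for b
  define W where "W = (c * sqrt (A 1) - s * sqrt (D 1))^2"
  \<comment> \<open>\<open>PP b / sqrt b = P0 b - A 1 * sqrt b\<close>; the square \<open>W\<close> absorbs what is left of the
    concave terms \<open>- sqrt b\<close> after \<open>Lt\<close> has taken \<open>- sqrt (A 1 * D 1) * sqrt b\<close>\<close>
  have decomp: "G b = 2 * c^2 * P0 b + 2 * s^2 * Q0 b + 4 * c * s * Lt b - 2 * W * sqrt b"
    if "0 < b" for b
  proof -
    have "PP b / sqrt b = P0 b - A 1 * (b / sqrt b)" "QQ b / sqrt b = Q0 b - D 1 * (b / sqrt b)"
      unfolding PP_def QQ_def P0_def Q0_def
      by (simp_all add: diff_divide_distrib add_divide_distrib algebra_simps)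
    then have "PP b / sqrt b = P0 b - A 1 * sqrt b" "QQ b / sqrt b = Q0 b - D 1 * sqrt b"
      using that by (simp_all add: real_div_sqrt)
    moreover have "cs_bound y b = Lt b + sqrt (A 1 * D 1) * sqrt b"
      by (simp add: Lt_def)
    moreover have "W = c^2 * A 1 - 2 * c * s * sqrt (A 1 * D 1) + s^2 * D 1"
      using A_1_pos D_1_pos by (simp add: W_def power2_eq_square real_sqrt_mult algebra_simps)
    ultimately show ?thesis
      unfolding G_def rayleigh_def by algebra
  qed
  have "P0 y < chord P0 x y" "Q0 y < chord Q0 x y"
    unfolding P0_def Q0_def
    by (intro pser_minus_linear_div_sqrt_below_chord fb_nonneg summable_fb fb_0_pos
        fc_nonneg summable_fc fc_0_pos xy)+
  then have "2 * c^2 * P0 y + 2 * s^2 * Q0 y < 2 * c^2 * chord P0 x y + 2 * s^2 * chord Q0 x y"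
    using unit_weights_strict_mono[OF cs(3)] by fastforce
  moreover have "4 * c * s * Lt y \<le> 4 * c * s * chord Lt x y"
    unfolding Lt_def using cs by (intro mult_left_mono cs_bound_below_chord[OF xy]) auto
  moreover have "2 * W * chord sqrt x y \<le> 2 * W * sqrt y"
    using xy by (intro mult_left_mono chord_sqrt_le) (auto simp: W_def)
  ultimately have "2 * c^2 * P0 y + 2 * s^2 * Q0 y + 4 * c * s * Lt y - 2 * W * sqrt y
      < 2 * c^2 * chord P0 x y + 2 * s^2 * chord Q0 x y + 4 * c * s * chord Lt x y - 2 * W * chord sqrt x y"
    by linarith
  also have "\<dots> = chord (\<lambda>b. 2 * c^2 * P0 b + 2 * s^2 * Q0 b + 4 * c * s * Lt b - 2 * W * sqrt b) x y"
    by (simp only: chord_add chord_diff chord_cmult)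
  also have "\<dots> = chord G x y"
    using xy decomp by (intro chord_cong) auto
  finally show ?thesis using decomp xy by simp
qed

lemma plus_branch_div_weight_strict_antimono:
  assumes xy: "0 < x" "x < y" "y < 1"
  shows "branch 1 y / (sqrt y * (1 - y)) < branch 1 x / (sqrt x * (1 - x))"
proof -
  define \<Lambda> where "\<Lambda> b = branch 1 b / sqrt b" for b
  obtain c s where cs: "0 \<le> c" "0 \<le> s" "c^2 + s^2 = 1"
    and max_y: "rayleigh c s (sqrt (AD_quot y)) y = \<Lambda> y"
    using rayleigh_attains_plus_branch[of y] xy unfolding \<Lambda>_def by auto
  define G where "G b = rayleigh c s (cs_bound y b) b" for b
  have "\<Lambda> y = G y"
    using max_y cs_bound_diag[of y] xy by (simp add: G_def)
  also have "\<dots> < chord G x y"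
    unfolding G_def using cs xy by (rule rayleigh_cs_bound_strict_below_chord)
  also have "\<dots> \<le> chord \<Lambda> x y"
    unfolding G_def \<Lambda>_def using xy cs
    by (intro chord_mono rayleigh_le_plus_branch cs_bound_le) auto
  also have "\<dots> = (1 - y) / (1 - x) * \<Lambda> x"
    by (rule chord_right_zero) (simp add: \<Lambda>_def branch_1)
  finally have "\<Lambda> y / (1 - y) < \<Lambda> x / (1 - x)"
    using xy by (simp add: field_simps)
  then show ?thesis by (simp add: \<Lambda>_def divide_divide_eq_left)
qed

lemma branch_div_weight_strict_antimono:
  assumes "s \<in> {-1, 1}" "0 < x" "x < y" "y < 1"
  shows "branch s y / (sqrt y * (1 - y)) < branch s x / (sqrt x * (1 - x))"
  using assms minus_branch_div_weight_strict_antimono plus_branch_div_weight_strict_antimono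
  by auto

end

text \<open>With finite first moments, \<open>branch 1\<close> vanishes at \<open>1\<close> with a difference quotient that
  extends continuously to \<open>1\<close>; its value there is twice the \<open>i\<close>-th summand of (E).\<close>

locale rate_component_moments = rate_component +
  assumes summable_moment_fa: "summable (\<lambda>m. real m * fa m)"
    and summable_moment_fb: "summable (\<lambda>m. real m * fb m)"
    and summable_moment_fc: "summable (\<lambda>m. real m * fc m)"
    and summable_moment_fd: "summable (\<lambda>m. real m * fd m)"
begin

definition "PP_dquot z = pser_dquot fb z - (A 1 + B 1)"
definition "QQ_dquot z = pser_dquot fc z - (C 1 + D 1)"
definition "RR_dquot z = ((QQ_dquot z - PP_dquot z) * ((QQ 1 - PP 1) + (QQ z - PP z))
    + 4 * (pser_dquot fa z * D 1 + A z * pser_dquot fd z)) / (RR 1 + RR z)"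

lemma RR_1_plus_RR_pos: "0 \<le> z \<Longrightarrow> z \<le> 1 \<Longrightarrow> 0 < RR 1 + RR z"
  using RR_nonneg[of z] A_1_pos D_1_pos by (simp add: RR_1)

lemma continuous_on_RR_dquot: "continuous_on {0..1} RR_dquot"
  unfolding RR_dquot_def[abs_def] PP_dquot_def[abs_def] QQ_dquot_def[abs_def]
  using RR_1_plus_RR_pos
  by (intro continuous_intros continuous_on_PP continuous_on_QQ continuous_on_RR
      continuous_on_pser continuous_on_pser_dquot fa_nonneg fb_nonneg fc_nonneg fd_nonneg
      summable_fa summable_moment_fa summable_moment_fb summable_moment_fc summable_moment_fd)
    (use RR_1_plus_RR_pos in force)

lemma plus_branch_eq_dquot:
  assumes z: "0 \<le> z" "z \<le> 1"
  shows "branch 1 z = - ((1 - z) * (PP_dquot z + QQ_dquot z + RR_dquot z))"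
proof -
  have PP: "PP 1 = PP z + (1 - z) * PP_dquot z"
    using pser_1_minus_pser[OF fb_nonneg summable_fb summable_moment_fb z]
    by (simp add: PP_def PP_dquot_def algebra_simps)
  have QQ: "QQ 1 = QQ z + (1 - z) * QQ_dquot z"
    using pser_1_minus_pser[OF fc_nonneg summable_fc summable_moment_fc z]
    by (simp add: QQ_def QQ_dquot_def algebra_simps)
  have A: "A 1 = A z + (1 - z) * pser_dquot fa z"
    using pser_1_minus_pser[OF fa_nonneg summable_fa summable_moment_fa z] by simp
  have D: "D 1 = D z + (1 - z) * pser_dquot fd z"
    using pser_1_minus_pser[OF fd_nonneg summable_fd summable_moment_fd z] by simp
  have RR_sq: "(RR b)^2 = (QQ b - PP b)^2 + 4 * A b * D b" if "0 \<le> b" "b \<le> 1" for b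
    unfolding RR_def using A_nonneg[OF that] D_nonneg[OF that] by simp
  \<comment> \<open>\<open>RR 1 - RR z = (RR 1\<^sup>2 - RR z\<^sup>2) / (RR 1 + RR z)\<close>\<close>
  have "(RR 1 - RR z) * (RR 1 + RR z) = ((1 - z) * RR_dquot z) * (RR 1 + RR z)"
  proof -
    have "(RR 1 - RR z) * (RR 1 + RR z) = (RR 1)^2 - (RR z)^2"
      by (simp add: power2_eq_square algebra_simps)
    also have "\<dots> = (1 - z) * ((QQ_dquot z - PP_dquot z) * ((QQ 1 - PP 1) + (QQ z - PP z))
        + 4 * (pser_dquot fa z * D 1 + A z * pser_dquot fd z))"
      unfolding RR_sq[OF z] RR_sq[of 1, simplified] PP QQ A D by algebra
    finally show ?thesis
      using RR_1_plus_RR_pos[OF z] by (simp add: RR_dquot_def)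
  qed
  then have "RR 1 - RR z = (1 - z) * RR_dquot z"
    using RR_1_plus_RR_pos[OF z] by simp
  then have RR: "RR 1 = RR z + (1 - z) * RR_dquot z" by simp
  have "branch 1 1 = 0" by (simp add: branch_1)
  then show ?thesis
    unfolding branch_def PP QQ RR by (simp add: algebra_simps)
qed

lemma continuous_on_plus_branch_dquot:
  "continuous_on {0..1} (\<lambda>z. PP_dquot z + QQ_dquot z + RR_dquot z)"
  unfolding PP_dquot_def[abs_def] QQ_dquot_def[abs_def]
  by (intro continuous_intros continuous_on_RR_dquot continuous_on_pser_dquot fb_nonneg fc_nonneg
      summable_moment_fb summable_moment_fc)

lemma plus_branch_dquot_1:
  "PP_dquot 1 + QQ_dquot 1 + RR_dquot 1 = 2 * (1 / (A 1 + D 1) *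
     (D 1 * ((\<Sum>m. real m * fa m) - A 1 + (\<Sum>m. real m * fb m) - B 1)
      + A 1 * ((\<Sum>m. real m * fc m) - C 1 + (\<Sum>m. real m * fd m) - D 1)))"
proof -
  have den: "A 1 + D 1 \<noteq> 0" using A_1_pos D_1_pos by simp
  moreover have "RR_dquot 1 = ((QQ_dquot 1 - PP_dquot 1) * (A 1 - D 1)
      + 2 * (pser_dquot fa 1 * D 1 + A 1 * pser_dquot fd 1)) / (A 1 + D 1)"
    unfolding RR_dquot_def PP_1 QQ_1 RR_1 using den by (simp add: field_simps)
  ultimately show ?thesis
    unfolding PP_dquot_def QQ_dquot_def pser_dquot_1 by (simp add: field_simps)
qed

end

section \<open>Roots in the unit interval\<close>

lemma pos_near_one:
  fixes f :: "real \<Rightarrow> real"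
  assumes "continuous_on {0..1} f" "0 < f 1"
  obtains z where "0 < z" "z < 1" "0 < f z"
proof -
  obtain d where d: "0 < d" "\<And>z. z \<in> {0..1} \<Longrightarrow> dist z 1 < d \<Longrightarrow> dist (f z) (f 1) < f 1"
    using assms unfolding continuous_on_iff by (meson atLeastAtMost_iff order_refl zero_le_one)
  define z where "z = max (1/2) (1 - d/2)"
  have z: "0 < z" "z < 1" "z \<in> {0..1}" "dist z 1 < d"
    using d(1) unfolding z_def by (auto simp: dist_real_def)
  then have "0 < f z" using d(2)[OF z(3,4)] by (simp add: dist_real_def abs_less_iff)
  with z show ?thesis by (intro that) auto
qed

lemma unique_root_if_weighted_strict_antimono:
  fixes \<Phi> w :: "real \<Rightarrow> real"
  assumes "continuous_on {0..1} \<Phi>" "0 < \<Phi> 0" "0 < z0" "z0 \<le> 1" "\<Phi> z0 < 0"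
    and antimono: "\<And>x y. 0 < x \<Longrightarrow> x < y \<Longrightarrow> y < 1 \<Longrightarrow> \<Phi> y / w y < \<Phi> x / w x"
  shows "\<exists>!z. z \<in> {0<..<1} \<and> \<Phi> z = 0"
proof -
  have "continuous_on {0..z0} \<Phi>"
    using assms by (auto intro: continuous_on_subset)
  then obtain z where z: "0 \<le> z" "z \<le> z0" "\<Phi> z = 0"
    using IVT2'[of \<Phi> z0 0 0] assms by auto
  moreover have "z \<noteq> 0" "z \<noteq> z0" using z assms by auto
  ultimately have "z \<in> {0<..<1} \<and> \<Phi> z = 0" using assms by auto
  moreover have "z' = z" if "z' \<in> {0<..<1} \<and> \<Phi> z' = 0" for z'
    using that calculation antimono[of z z'] antimono[of z' z] by (cases z z' rule: linorder_cases) auto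
  ultimately show ?thesis by blast
qed

section \<open>The sum over all components\<close>

type_synonym rates = "nat \<Rightarrow> int \<Rightarrow> real"

text \<open>The coefficient of \<open>z ^ m\<close> in the generating function of the rates \<open>r i\<close> (for \<open>K = 1\<close>).\<close>

definition rate_coeffs :: "rates \<Rightarrow> nat \<Rightarrow> nat \<Rightarrow> real" where
  "rate_coeffs r i m = r i (1 - int m)"

lemma gf1_eq_pser: "gf1 r i z = pser (rate_coeffs r i) z"
  unfolding gf1_def pser_def rate_coeffs_def ..

lemma gf1_deriv_at1_eq: "gf1_deriv_at1 r i = (\<Sum>m. real m * rate_coeffs r i m)"
  unfolding gf1_deriv_at1_def rate_coeffs_def ..

lemma rate_component_moments_coeffs:
  assumes "assumption_A c a b cc d" "i \<in> {1..c}"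
  shows "rate_component_moments (rate_coeffs a i) (rate_coeffs b i) (rate_coeffs cc i) (rate_coeffs d i)"
proof -
  note Ai = bspec[OF assms(1)[unfolded assumption_A_def] assms(2)]
  have nonneg: "0 \<le> rate_coeffs r i m" if "r \<in> {a, b, cc, d}" for r m
    using Ai that unfolding rate_coeffs_def by auto
  have "0 \<le> b i 1" using nonneg[of b 0] by (simp add: rate_coeffs_def)
  moreover have "b i 1 \<noteq> 0" using Ai by blast
  ultimately have pos: "0 < b i 1" by simp
  show ?thesis
    by unfold_locales
      (use Ai nonneg pos in \<open>auto simp: rate_coeffs_def[abs_def] gf1_def pser_def\<close>)
qed

definition Ex_sum :: "nat \<Rightarrow> rates \<Rightarrow> rates \<Rightarrow> rates \<Rightarrow> rates \<Rightarrow> (nat \<Rightarrow> real) \<Rightarrow> real \<Rightarrow> real" where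
  "Ex_sum c a b cc d x z = (\<Sum>i=1..c.
     rate_component.branch (rate_coeffs a i) (rate_coeffs b i) (rate_coeffs cc i) (rate_coeffs d i) (x i) z)"

definition Ex_dquot :: "nat \<Rightarrow> rates \<Rightarrow> rates \<Rightarrow> rates \<Rightarrow> rates \<Rightarrow> real \<Rightarrow> real" where
  "Ex_dquot c a b cc d z = (\<Sum>i=1..c.
     rate_component_moments.PP_dquot (rate_coeffs a i) (rate_coeffs b i) z
     + rate_component_moments.QQ_dquot (rate_coeffs cc i) (rate_coeffs d i) z
     + rate_component_moments.RR_dquot (rate_coeffs a i) (rate_coeffs b i) (rate_coeffs cc i)
         (rate_coeffs d i) z)"

context
  fixes c :: nat and a b cc d :: rates
  assumes A: "assumption_A c a b cc d"
begin

lemma rate_component_coeffs: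
  "i \<in> {1..c} \<Longrightarrow> rate_component (rate_coeffs a i) (rate_coeffs b i) (rate_coeffs cc i) (rate_coeffs d i)"
  using rate_component_moments_coeffs[OF A] rate_component_moments.axioms(1) by blast

lemma eq_Ex_iff_Ex_sum: "eq_Ex c a b cc d x z \<longleftrightarrow> Ex_sum c a b cc d x z = 0"
proof -
  have "x i * R1 a b cc d i z + gf1 b i z + gf1 cc i z
      - z * (gf1 a i 1 + gf1 b i 1 + gf1 cc i 1 + gf1 d i 1)
    = rate_component.branch (rate_coeffs a i) (rate_coeffs b i) (rate_coeffs cc i) (rate_coeffs d i) (x i) z"
    if "i \<in> {1..c}" for i
    unfolding rate_component.branch_def[OF rate_component_coeffs[OF that]]
      rate_component.PP_def[OF rate_component_coeffs[OF that]]
      rate_component.QQ_def[OF rate_component_coeffs[OF that]]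
      rate_component.RR_def[OF rate_component_coeffs[OF that]] R1_def F1_def gf1_eq_pser
    by (simp add: algebra_simps)
  then show ?thesis unfolding eq_Ex_def Ex_sum_def by (auto intro: sum.cong)
qed

lemma continuous_on_Ex_sum: "continuous_on {0..1} (Ex_sum c a b cc d x)"
  unfolding Ex_sum_def[abs_def]
  by (intro continuous_on_sum rate_component.continuous_on_branch rate_component_coeffs) auto

lemma Ex_sum_0_pos:
  assumes c: "1 \<le> c"
  shows "0 < Ex_sum c a b cc d x 0"
proof -
  have "Ex_sum c a b cc d x 0 = (\<Sum>i=1..c. 2 * rate_coeffs b i 0)"
    unfolding Ex_sum_def by (intro sum.cong refl rate_component.branch_0 rate_component_coeffs)
  also have "\<dots> > 0"
    using c rate_component.fb_0_pos[OF rate_component_coeffs] by (intro sum_pos) auto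
  finally show ?thesis .
qed

lemma Ex_sum_div_weight_strict_antimono:
  assumes c: "1 \<le> c" and x: "\<forall>i\<in>{1..c}. x i \<in> {-1, 1}" and "0 < y" "y < z" "z < 1"
  shows "Ex_sum c a b cc d x z / (sqrt z * (1 - z)) < Ex_sum c a b cc d x y / (sqrt y * (1 - y))"
  unfolding Ex_sum_def sum_divide_distrib using assms
  by (intro sum_strict_mono rate_component.branch_div_weight_strict_antimono
      rate_component_coeffs) auto

lemma Ex_sum_1: "Ex_sum c a b cc d x 1 = (\<Sum>i=1..c. (x i - 1) * (gf1 a i 1 + gf1 d i 1))"
  unfolding Ex_sum_def gf1_eq_pser
  by (intro sum.cong refl rate_component.branch_1 rate_component_coeffs) auto

lemma Ex_sum_1_neg:
  assumes x: "\<forall>i\<in>{1..c}. x i \<in> {-1, 1}" and "\<exists>j\<in>{1..c}. x j = -1"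
  shows "Ex_sum c a b cc d x 1 < 0"
proof -
  have AD: "0 < gf1 a i 1 + gf1 d i 1" if "i \<in> {1..c}" for i
    using A that unfolding assumption_A_def by (auto intro: add_pos_pos)
  have "(\<Sum>i=1..c. (x i - 1) * (gf1 a i 1 + gf1 d i 1)) < (\<Sum>i=1..c. 0)"
  proof (rule sum_strict_mono_ex1)
    show "\<forall>i\<in>{1..c}. (x i - 1) * (gf1 a i 1 + gf1 d i 1) \<le> 0"
    proof
      fix i assume i: "i \<in> {1..c}"
      have "x i - 1 \<le> 0" using bspec[OF x i] by auto
      then show "(x i - 1) * (gf1 a i 1 + gf1 d i 1) \<le> 0"
        using AD[OF i] by (simp add: mult_nonpos_nonneg)
    qed
    obtain j where j: "j \<in> {1..c}" "x j = -1" using assms(2) by blast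
    then show "\<exists>i\<in>{1..c}. (x i - 1) * (gf1 a i 1 + gf1 d i 1) < 0"
      using AD[OF j(1)] by (intro bexI[OF _ j(1)]) simp
  qed simp
  then show ?thesis by (simp add: Ex_sum_1)
qed

lemma Ex_sum_eq_Ex_dquot:
  assumes "\<forall>i\<in>{1..c}. x i = 1" "0 \<le> z" "z \<le> 1"
  shows "Ex_sum c a b cc d x z = - ((1 - z) * Ex_dquot c a b cc d z)"
  unfolding Ex_sum_def Ex_dquot_def sum_distrib_left sum_negf[symmetric] using assms
  by (intro sum.cong refl)
    (simp add: rate_component_moments.plus_branch_eq_dquot[OF rate_component_moments_coeffs[OF A]])

lemma continuous_on_Ex_dquot: "continuous_on {0..1} (Ex_dquot c a b cc d)"
  unfolding Ex_dquot_def[abs_def]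
  by (intro continuous_on_sum rate_component_moments.continuous_on_plus_branch_dquot
      rate_component_moments_coeffs[OF A]) auto

lemma Ex_dquot_1_pos:
  assumes "ergodicity_E c a b cc d"
  shows "0 < Ex_dquot c a b cc d 1"
proof -
  have "Ex_dquot c a b cc d 1 = 2 * (\<Sum>i=1..c. 1 / (gf1 a i 1 + gf1 d i 1) *
      (gf1 d i 1 * (gf1_deriv_at1 a i - gf1 a i 1 + gf1_deriv_at1 b i - gf1 b i 1)
       + gf1 a i 1 * (gf1_deriv_at1 cc i - gf1 cc i 1 + gf1_deriv_at1 d i - gf1 d i 1)))"
    unfolding Ex_dquot_def sum_distrib_left gf1_eq_pser gf1_deriv_at1_eq
    by (intro sum.cong refl rate_component_moments.plus_branch_dquot_1
        rate_component_moments_coeffs[OF A]) auto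
  then show ?thesis using assms unfolding ergodicity_E_def by simp
qed

lemma Ex_sum_negative_somewhere:
  assumes x: "\<forall>i\<in>{1..c}. x i \<in> {-1, 1}" and E: "ergodicity_E c a b cc d"
  obtains z0 where "0 < z0" "z0 \<le> 1" "Ex_sum c a b cc d x z0 < 0"
proof (cases "\<exists>j\<in>{1..c}. x j = -1")
  case True
  then show ?thesis using Ex_sum_1_neg[OF x] by (intro that[of 1]) auto
next
  case False
  then have "\<forall>i\<in>{1..c}. x i = 1" using x by auto
  obtain z0 where "0 < z0" "z0 < 1" "0 < Ex_dquot c a b cc d z0"
    using continuous_on_Ex_dquot Ex_dquot_1_pos[OF E] by (rule pos_near_one)
  with Ex_sum_eq_Ex_dquot[OF \<open>\<forall>i\<in>{1..c}. x i = 1\<close>] show ?thesis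
    by (intro that[of z0]) (auto intro: mult_pos_pos)
qed

end

theorem corollary2:
  fixes c :: nat and a b cc d :: "nat \<Rightarrow> int \<Rightarrow> real"
  assumes "c \<ge> 1"
    and "assumption_A c a b cc d"
    and "ergodicity_E c a b cc d"
  shows "\<forall>x :: nat \<Rightarrow> real. (\<forall>i\<in>{1..c}. x i \<in> {-1, 1}) \<longrightarrow>
           (\<exists>!\<beta>. \<beta> \<in> {0<..<1} \<and> eq_Ex c a b cc d x \<beta>)"
proof (intro allI impI)
  fix x :: "nat \<Rightarrow> real"
  assume x: "\<forall>i\<in>{1..c}. x i \<in> {-1, 1}"
  obtain z0 where "0 < z0" "z0 \<le> 1" "Ex_sum c a b cc d x z0 < 0"
    using Ex_sum_negative_somewhere[OF assms(2) x assms(3)] .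
  then have "\<exists>!\<beta>. \<beta> \<in> {0<..<1} \<and> Ex_sum c a b cc d x \<beta> = 0"
    using continuous_on_Ex_sum[OF assms(2)] Ex_sum_0_pos[OF assms(2,1)]
      Ex_sum_div_weight_strict_antimono[OF assms(2,1) x]
    by (intro unique_root_if_weighted_strict_antimono[where w = "\<lambda>z. sqrt z * (1 - z)"]) auto
  then show "\<exists>!\<beta>. \<beta> \<in> {0<..<1} \<and> eq_Ex c a b cc d x \<beta>"
    unfolding eq_Ex_iff_Ex_sum[OF assms(2)] .
qed

end
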